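(* Let $p>0$, $x\ge0$, $0<y<1$, and $q>1$. Define $$\bar c_{p,q}=\frac{p+q-1}{q}\,(1-y)\,\frac{M(p+q,p,xy/2)}{M(p+q-1,p,xy/2)}.$$ Then both $y_k=B_{p,k}(x,y)$ and $y_k=\bar B_{p,k}(x,y)$ satisfy $$y_{q+1}-(1+\bar c_{p,q})\,y_q+\bar c_{p,q}\,y_{q-1}=0 .$$
   Context: For $p,q>0$ and $0\le y\le 1$, $I_y(p,q)=\frac{1}{B(p,q)}\int_0^y t^{p-1}(1-t)^{q-1}\,dt$ is the regularized incomplete beta function, with $B(p,q)=\Gamma(p)\Gamma(q)/\Gamma(p+q)$. The cumulative noncentral beta distribution is $B_{p,q}(x,y)=e^{-x/2}\sum_{j=0}^\infty \frac{1}{j!}\left(\frac x2\right)^j I_y(p+j,q)$ for $x\ge0$, and its complement is $\bar B_{p,q}(x,y)=1-B_{p,q}(x,y)$. $M(a,b,z)=\sum_{n\ge0}\frac{(a)_n}{(b)_n}\frac{z^n}{n!}$ is Kummer's confluent hypergeometric function, and $(a)_n$ is the Pochhammer symbol. *)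

theory Defs
  imports "HOL-Analysis.Analysis"
begin

definition inc_beta :: "real \<Rightarrow> real \<Rightarrow> real \<Rightarrow> real" where
  "inc_beta y p q =
     integral {0..y} (\<lambda>t. t powr (p - 1) * (1 - t) powr (q - 1)) / Beta p q"

definition nc_beta :: "real \<Rightarrow> real \<Rightarrow> real \<Rightarrow> real \<Rightarrow> real" where
  "nc_beta p q x y =
     exp (- x / 2) * (\<Sum>j. (x / 2) ^ j / fact j * inc_beta y (p + real j) q)"

definition nc_beta_compl :: "real \<Rightarrow> real \<Rightarrow> real \<Rightarrow> real \<Rightarrow> real" where
  "nc_beta_compl p q x y = 1 - nc_beta p q x y"

definition kummerM :: "real \<Rightarrow> real \<Rightarrow> real \<Rightarrow> real" where
  "kummerM a b z = (\<Sum>n. pochhammer a n / pochhammer b n * z ^ n / fact n)"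

end

theory Submission
  imports Defs "HOL-Real_Asymp.Real_Asymp"
begin

text \<open>
  Integrating the derivative of \<open>t^p (1-t)^q\<close> over \<open>[0,y]\<close> gives the contiguous relation
  \<open>I_y(p,q+1) - I_y(p,q) = y^p (1-y)^q / (q B(p,q))\<close>.  Weighting by the Poisson
  probabilities and using \<open>B(p,q) / B(p+j,q) = (p+q)_j / (p)_j\<close>, the first difference in \<open>q\<close>
  becomes \<open>B_{p,q+1} - B_{p,q} = e^{-x/2} y^p (1-y)^q / (q B(p,q)) M(p+q, p, xy/2)\<close>.
  The quotient of two consecutive such differences is exactly \<open>c_{p,q}\<close>, which is the
  recurrence; it transfers to the complement because its coefficients sum to zero.
\<close>

definition inc_beta_integral :: "real \<Rightarrow> real \<Rightarrow> real \<Rightarrow> real" where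
  "inc_beta_integral y a b = integral {0..y} (\<lambda>t. t powr (a - 1) * (1 - t) powr (b - 1))"

lemma inc_beta_eq_integral: "inc_beta y a b = inc_beta_integral y a b / Beta a b"
  unfolding inc_beta_def inc_beta_integral_def ..

lemma beta_kernel_integrable_on:
  fixes a b y :: real
  assumes "a > 0" "b > 0" "0 \<le> y" "y \<le> 1"
  shows "(\<lambda>t. t powr (a - 1) * (1 - t) powr (b - 1)) integrable_on {0..y}"
  by (rule integrable_on_subinterval[OF integrable_Beta'[OF assms(1,2)]]) (use assms in auto)

lemma beta_kernel_shift_integrable_on:
  fixes a b y :: real
  assumes "a > 0" "b > 0" "0 \<le> y" "y \<le> 1"
  shows "(\<lambda>t. t powr (a - 1) * (1 - t) powr b) integrable_on {0..y}"
    and "(\<lambda>t. t powr a * (1 - t) powr (b - 1)) integrable_on {0..y}"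
  using beta_kernel_integrable_on[of a "b + 1" y] beta_kernel_integrable_on[of "a + 1" b y] assms
  by simp_all

lemma inc_beta_integral_by_parts:
  fixes a b y :: real
  assumes a: "a > 0" and b: "b > 0" and y: "0 \<le> y" "y \<le> 1"
  shows "a * inc_beta_integral y a (b + 1) - b * inc_beta_integral y (a + 1) b
           = y powr a * (1 - y) powr b"
proof -
  have "((\<lambda>t. a * (t powr (a - 1) * (1 - t) powr b) - b * (t powr a * (1 - t) powr (b - 1)))
          has_integral (y powr a * (1 - y) powr b - 0 powr a * (1 - 0) powr b)) {0..y}"
  proof (rule fundamental_theorem_of_calculus_interior)
    show "continuous_on {0..y} (\<lambda>t. t powr a * (1 - t) powr b)"
      using a b y by (intro continuous_intros continuous_on_powr') auto
  next
    fix t assume t: "t \<in> {0<..<y}"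
    have "((\<lambda>t. t powr a * (1 - t) powr b) has_real_derivative
            (a * t powr (a - 1) * (1 - t) powr b + t powr a * (b * (1 - t) powr (b - 1) * -1))) (at t)"
      using t y by (intro derivative_eq_intros has_real_derivative_powr) auto
    then show "((\<lambda>t. t powr a * (1 - t) powr b) has_vector_derivative
                 a * (t powr (a - 1) * (1 - t) powr b) - b * (t powr a * (1 - t) powr (b - 1))) (at t)"
      by (simp add: has_real_derivative_iff_has_vector_derivative algebra_simps)
  qed (use y in auto)
  then have "integral {0..y} (\<lambda>t. a * (t powr (a - 1) * (1 - t) powr b)
                                   - b * (t powr a * (1 - t) powr (b - 1)))
             = y powr a * (1 - y) powr b"
    by (simp add: integral_unique)
  moreover have "integral {0..y} (\<lambda>t. a * (t powr (a - 1) * (1 - t) powr b)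
                                   - b * (t powr a * (1 - t) powr (b - 1)))
      = a * integral {0..y} (\<lambda>t. t powr (a - 1) * (1 - t) powr b)
        - b * integral {0..y} (\<lambda>t. t powr a * (1 - t) powr (b - 1))"
    using integrable_on_cmult_left[OF beta_kernel_shift_integrable_on(1)[OF assms], of a]
      integrable_on_cmult_left[OF beta_kernel_shift_integrable_on(2)[OF assms], of b]
    by (subst integral_diff) auto
  ultimately show ?thesis
    unfolding inc_beta_integral_def by simp
qed

lemma inc_beta_integral_split:
  fixes a b y :: real
  assumes "a > 0" "b > 0" and y: "0 \<le> y" "y \<le> 1"
  shows "inc_beta_integral y a b = inc_beta_integral y a (b + 1) + inc_beta_integral y (a + 1) b"
proof -
  have pointwise: "t powr (a - 1) * (1 - t) powr (b - 1)
      = t powr (a - 1) * (1 - t) powr b + t powr a * (1 - t) powr (b - 1)"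
    if "t \<in> {0..y}" for t
  proof (cases "t = 0 \<or> t = 1")
    case False
    with that y have "t > 0" "1 - t > 0" by auto
    then have "t powr a = t powr (a - 1) * t" and "(1 - t) powr b = (1 - t) powr (b - 1) * (1 - t)"
      using powr_add[of t "a - 1" 1] powr_add[of "1 - t" "b - 1" 1] by simp_all
    then show ?thesis unfolding \<open>t powr a = _\<close> \<open>(1 - t) powr b = _\<close> by (simp add: algebra_simps)
  qed auto
  have "integral {0..y} (\<lambda>t. t powr (a - 1) * (1 - t) powr (b - 1))
      = integral {0..y} (\<lambda>t. t powr (a - 1) * (1 - t) powr b + t powr a * (1 - t) powr (b - 1))"
    by (rule integral_cong) (rule pointwise)
  also have "\<dots> = integral {0..y} (\<lambda>t. t powr (a - 1) * (1 - t) powr b)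
                  + integral {0..y} (\<lambda>t. t powr a * (1 - t) powr (b - 1))"
    using beta_kernel_shift_integrable_on[OF assms] by (rule integral_add)
  finally show ?thesis
    unfolding inc_beta_integral_def by simp
qed

lemma Beta_pos: "a > 0 \<Longrightarrow> b > 0 \<Longrightarrow> Beta a b > (0::real)"
  by (simp add: Beta_def)

lemma Beta_plus1_right_real:
  fixes a b :: real
  assumes "b > 0"
  shows "(a + b) * Beta a (b + 1) = b * Beta a b"
  using assms by (intro Beta_plus1_right) (auto elim: nonpos_Ints_cases)

definition inc_beta_step :: "real \<Rightarrow> real \<Rightarrow> real \<Rightarrow> real" where
  "inc_beta_step y a b = y powr a * (1 - y) powr b / (b * Beta a b)"

lemma inc_beta_plus1_right:
  fixes a b y :: real
  assumes a: "a > 0" and b: "b > 0" and y: "0 \<le> y" "y \<le> 1"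
  shows "inc_beta y a (b + 1) - inc_beta y a b = inc_beta_step y a b"
proof -
  define J where "J = inc_beta_integral y a b"
  define K where "K = y powr a * (1 - y) powr b"
  have J_plus1: "(a + b) * inc_beta_integral y a (b + 1) = b * J + K"
    using inc_beta_integral_by_parts[OF assms] inc_beta_integral_split[OF assms]
    unfolding J_def K_def by (simp add: algebra_simps)
  have "inc_beta y a (b + 1)
      = ((a + b) * inc_beta_integral y a (b + 1)) / ((a + b) * Beta a (b + 1))"
    using a b unfolding inc_beta_eq_integral by simp
  also have "\<dots> = (b * J + K) / (b * Beta a b)"
    unfolding J_plus1 Beta_plus1_right_real[OF b] ..
  moreover have "inc_beta y a b = J / Beta a b"
    unfolding J_def inc_beta_eq_integral ..
  ultimately show ?thesis
    using b Beta_pos[OF a b] unfolding inc_beta_step_def K_def[symmetric] by (simp add: field_simps)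
qed

lemma inc_beta_nonneg_le_one:
  fixes a b y :: real
  assumes "a > 0" "b > 0" "0 \<le> y" "y \<le> 1"
  shows "0 \<le> inc_beta y a b \<and> inc_beta y a b \<le> 1"
proof -
  let ?f = "\<lambda>t. t powr (a - 1) * (1 - t) powr (b - 1)"
  have "integral {0..1} ?f = Beta a b"
    using has_integral_Beta_real[OF assms(1,2)] by (rule integral_unique)
  moreover have "integral {0..y} ?f \<ge> 0"
    by (rule integral_nonneg[OF beta_kernel_integrable_on[OF assms]]) auto
  moreover have "integral {0..y} ?f \<le> integral {0..1} ?f"
    by (rule integral_subset_le[OF _ beta_kernel_integrable_on[OF assms] integrable_Beta'])
       (use assms in auto)
  ultimately show ?thesis
    using Beta_pos[OF assms(1,2)] unfolding inc_beta_def by (simp add: divide_simps)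
qed

lemma Beta_shift_left_pochhammer:
  fixes a b :: real
  assumes "a > 0" "b > 0"
  shows "Beta a b / Beta (a + real j) b = pochhammer (a + b) j / pochhammer a j"
proof -
  have poch: "pochhammer (a + b) j = Gamma (a + b + real j) / Gamma (a + b)"
    "pochhammer a j = Gamma (a + real j) / Gamma a"
    using assms by (auto intro!: pochhammer_Gamma elim!: nonpos_Ints_cases)
  have "Gamma a \<noteq> 0" "Gamma b \<noteq> 0" "Gamma (a + b) \<noteq> 0"
    "Gamma (a + real j) \<noteq> 0" "Gamma (a + b + real j) \<noteq> 0"
    using assms by (auto intro!: Gamma_real_pos[THEN less_imp_neq, symmetric])
  then show ?thesis
    unfolding poch Beta_def by (simp add: field_simps add_ac)
qed

lemma summable_kummer_series:
  fixes a b z :: real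
  assumes b: "b > 0"
  shows "summable (\<lambda>n. pochhammer a n / pochhammer b n * z ^ n / fact n)"
proof -
  define r where "r n = (a + real n) * z / ((b + real n) * (real n + 1))" for n
  have r_lim: "(r \<longlongrightarrow> 0) at_top"
  proof -
    have "((\<lambda>n. (a + real n) / ((b + real n) * (real n + 1))) \<longlongrightarrow> 0) at_top"
      by real_asymp
    from tendsto_mult_right_zero[OF this, of z] show ?thesis
      unfolding r_def by (simp add: field_simps)
  qed
  have "eventually (\<lambda>n. \<bar>r n\<bar> < 1 / 2) at_top"
    by (rule order_tendstoD(2)[OF tendsto_rabs_zero[OF r_lim]]) simp
  then obtain N where N: "\<And>n. n \<ge> N \<Longrightarrow> \<bar>r n\<bar> < 1 / 2"
    by (auto simp: eventually_at_top_linorder)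
  define t where "t n = pochhammer a n / pochhammer b n * z ^ n / fact n" for n
  have "norm (t (Suc n)) \<le> 1 / 2 * norm (t n)" if "n \<ge> N" for n
  proof -
    have "pochhammer b n > 0" "b + real n > 0" using b by (auto intro: pochhammer_pos)
    then have "t (Suc n) = r n * t n"
      unfolding r_def t_def by (simp add: pochhammer_rec' field_simps)
    moreover have "\<bar>r n\<bar> * \<bar>t n\<bar> \<le> 1 / 2 * \<bar>t n\<bar>"
      using N[OF that] by (intro mult_right_mono) auto
    ultimately show ?thesis
      by (simp add: abs_mult)
  qed
  then show ?thesis
    unfolding t_def[symmetric] by (intro summable_ratio_test[of "1 / 2" N]) auto
qed

lemma kummerM_pos:
  fixes a b z :: real
  assumes "a > 0" "b > 0" "z \<ge> 0"
  shows "kummerM a b z > 0"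
  unfolding kummerM_def
proof (rule suminf_pos2[OF summable_kummer_series[OF assms(2)], where i = 0])
  fix n
  show "0 \<le> pochhammer a n / pochhammer b n * z ^ n / fact n"
    using assms by (simp add: pochhammer_nonneg)
qed simp

lemma summable_nc_beta_series:
  fixes p q x y :: real
  assumes "p > 0" "q > 0" "x \<ge> 0" "0 \<le> y" "y \<le> 1"
  shows "summable (\<lambda>j. (x / 2) ^ j / fact j * inc_beta y (p + real j) q)"
proof (rule summable_comparison_test[OF _ summable_exp[of "x / 2"]])
  have "norm ((x / 2) ^ j / fact j * inc_beta y (p + real j) q) \<le> inverse (fact j) * (x / 2) ^ j"
    for j :: nat
  proof -
    have "0 \<le> inc_beta y (p + real j) q" "inc_beta y (p + real j) q \<le> 1"
      using inc_beta_nonneg_le_one[of "p + real j" q y] assms by auto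
    moreover have "0 \<le> (x / 2) ^ j / fact j"
      using assms by simp
    ultimately have "norm ((x / 2) ^ j / fact j * inc_beta y (p + real j) q) \<le> (x / 2) ^ j / fact j"
      by (simp only: real_norm_def abs_of_nonneg mult_nonneg_nonneg mult_left_le)
    then show ?thesis
      by (simp add: field_simps)
  qed
  then show "\<exists>N. \<forall>j\<ge>N. norm ((x / 2) ^ j / fact j * inc_beta y (p + real j) q)
                     \<le> inverse (fact j) * (x / 2) ^ j"
    by blast
qed

lemma nc_beta_plus1_right_diff:
  fixes p q x y :: real
  assumes p: "p > 0" and q: "q > 0" and "x \<ge> 0" and y: "0 < y" "y \<le> 1"
  shows "nc_beta p (q + 1) x y - nc_beta p q x y
           = exp (- x / 2) * inc_beta_step y p q * kummerM (p + q) p (x * y / 2)"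
proof -
  define K where "K = inc_beta_step y p q"
  define m where "m j = pochhammer (p + q) j / pochhammer p j * (x * y / 2) ^ j / fact j" for j
  have term_diff: "(x / 2) ^ j / fact j * inc_beta y (p + real j) (q + 1)
                   - (x / 2) ^ j / fact j * inc_beta y (p + real j) q = K * m j" for j
  proof -
    have y_powr: "y powr (p + real j) = y powr p * y ^ j"
      using y by (simp add: powr_add powr_realpow)
    have "(x / 2) ^ j / fact j * inc_beta y (p + real j) (q + 1)
          - (x / 2) ^ j / fact j * inc_beta y (p + real j) q
        = (x / 2) ^ j / fact j * (inc_beta y (p + real j) (q + 1) - inc_beta y (p + real j) q)"
      by (rule right_diff_distrib[symmetric])
    also have "\<dots> = (x / 2) ^ j / fact j
                      * (y powr (p + real j) * (1 - y) powr q / (q * Beta (p + real j) q))"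
      using inc_beta_plus1_right[of "p + real j" q y] p q y by (simp add: inc_beta_step_def)
    also have "\<dots> = K * (Beta p q / Beta (p + real j) q) * (x * y / 2) ^ j / fact j"
      using y_powr Beta_pos[OF p q] Beta_pos[of "p + real j" q] p q
      unfolding K_def inc_beta_step_def by (simp add: power_mult_distrib field_simps)
    also have "\<dots> = K * m j"
      unfolding Beta_shift_left_pochhammer[OF p q] m_def by simp
    finally show ?thesis .
  qed

  have "nc_beta p (q + 1) x y - nc_beta p q x y
      = exp (- x / 2) * (\<Sum>j. (x / 2) ^ j / fact j * inc_beta y (p + real j) (q + 1)
                           - (x / 2) ^ j / fact j * inc_beta y (p + real j) q)"
    using suminf_diff[OF summable_nc_beta_series[of p "q + 1" x y] summable_nc_beta_series[of p q x y]]
      assms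
    unfolding nc_beta_def by (simp add: right_diff_distrib[symmetric])
  also have "\<dots> = exp (- x / 2) * (K * kummerM (p + q) p (x * y / 2))"
    unfolding term_diff kummerM_def m_def
    using suminf_mult[OF summable_kummer_series[OF p, of "p + q" "x * y / 2"]] by simp
  finally show ?thesis
    unfolding K_def by simp
qed

lemma inc_beta_step_minus1_right:
  fixes a b y :: real
  assumes a: "a > 0" and b: "b > 1" and y: "y \<le> 1"
  shows "inc_beta_step y a b = (a + b - 1) / b * (1 - y) * inc_beta_step y a (b - 1)"
proof -
  define r where "r = a + b - 1"
  have "r > 0" using a b unfolding r_def by simp
  have Beta_rel: "(b - 1) * Beta a (b - 1) = r * Beta a b"
    using Beta_plus1_right_real[of "b - 1" a] b unfolding r_def by (simp add: algebra_simps)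
  have powr_b: "(1 - y) powr b = (1 - y) powr (b - 1) * (1 - y)"
    using y powr_add[of "1 - y" "b - 1" 1] by simp
  show ?thesis
    unfolding inc_beta_step_def r_def[symmetric] Beta_rel powr_b
    using \<open>r > 0\<close> b Beta_pos[OF a, of b] by (simp add: field_simps)
qed

theorem mainTheorem6:
  fixes p q x y :: real
  assumes "p > 0" and "x \<ge> 0" and "0 < y" and "y < 1" and "q > 1"
  defines "c \<equiv> (p + q - 1) / q * (1 - y) *
                 (kummerM (p + q) p (x * y / 2) / kummerM (p + q - 1) p (x * y / 2))"
  shows "nc_beta p (q + 1) x y - (1 + c) * nc_beta p q x y + c * nc_beta p (q - 1) x y = 0 \<and>
         nc_beta_compl p (q + 1) x y - (1 + c) * nc_beta_compl p q x y
           + c * nc_beta_compl p (q - 1) x y = 0"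
proof -
  define \<Delta> where "\<Delta> r = nc_beta p (r + 1) x y - nc_beta p r x y" for r
  define M where "M a = kummerM a p (x * y / 2)" for a
  have "\<Delta> q = exp (- x / 2) * inc_beta_step y p q * M (p + q)"
    using nc_beta_plus1_right_diff[of p q x y] assms unfolding \<Delta>_def M_def by simp
  moreover have "\<Delta> (q - 1) = exp (- x / 2) * inc_beta_step y p (q - 1) * M (p + q - 1)"
    using nc_beta_plus1_right_diff[of p "q - 1" x y] assms unfolding \<Delta>_def M_def
    by (simp add: algebra_simps)
  moreover have "inc_beta_step y p q = (p + q - 1) / q * (1 - y) * inc_beta_step y p (q - 1)"
    using inc_beta_step_minus1_right assms by simp
  moreover have "M (p + q - 1) > 0"
    unfolding M_def using assms by (intro kummerM_pos) auto
  ultimately have "\<Delta> q = c * \<Delta> (q - 1)"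
    unfolding c_def M_def[symmetric] by simp
  then have "nc_beta p (q + 1) x y - (1 + c) * nc_beta p q x y + c * nc_beta p (q - 1) x y = 0"
    unfolding \<Delta>_def by (simp add: algebra_simps)
  then show ?thesis
    unfolding nc_beta_compl_def by (simp add: algebra_simps)
qed

end
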